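(* Let $\mathbf C$ be a finite-type chain complex of real inner product spaces, let $I^\Delta$ be a Hodge basis, and let $M^\Delta$ be the Hodge matching on $(\mathbf C,I^\Delta)$. Then $M^\Delta$ is a Morse matching, the critical cells of degree $n$ span $\operatorname{Ker}\Delta_n$ for every $n$ (where $\Delta$ is the combinatorial Laplacian of $\mathbf C$), and the boundary operator of the Morse complex $\mathbf C^{M^\Delta}$ is zero.
   Context: $\mathbf C$ is a chain complex $(\mathbf C,\partial)$ of finite-dimensional real inner product spaces $\mathbf C_n$, $n\ge0$; $\partial^\dagger$ is the adjoint and $\Delta_n=\partial_n^\dagger\partial_n+\partial_{n+1}\partial_{n+1}^\dagger$. A Hodge basis: in each degree choose, via singular value decompositions, orthonormal bases $\mathcal R_+(\partial_m)$ of $\operatorname{Im}\partial_m^\dagger\subseteq\mathbf C_m$ and $\mathcal L_+(\partial_m)$ of $\operatorname{Im}\partial_m\subseteq\mathbf C_{m-1}$ with a bijection $v\mapsto w$ such that $\partial_m v=\sigma w$ with $\sigma>0$, and a basis $\mathcal B(\operatorname{Ker}\Delta_n)$; then $I^\Delta_n=\mathcal L_+(\partial_{n+1})\cup\mathcal R_+(\partial_n)\cup\mathcal B(\operatorname{Ker}\Delta_n)$, and $\mathbf C$ is based by the one-dimensional summands spanned by these vectors. The Hodge matching is $M^\Delta=\bigcup_i\{v\to w: v\in\mathcal R_+(\partial_i),w\in\mathcal L_+(\partial_i),\partial_iv=\sigma w,\sigma\ne0\}$. For a based complex with summands $C_\alpha$, $\partial_{\beta,\alpha}=\pi_\beta\partial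 i_\alpha$; the graph has an edge $\alpha\to\beta$ when $\partial_{\beta,\alpha}\ne0$; a Morse matching is an edge set $M$ with each cell on at most one edge, each $\partial_{\beta,\alpha}$ ($\alpha\to\beta\in M$) an isomorphism, and "directed path from $\alpha$ to $\beta$ in the graph with $M$ reversed" a partial order on each degree. Critical cells are unmatched ones. The Morse complex has chain groups spanned by critical cells and boundary $x\mapsto\sum_{\beta \text{ critical}}\Gamma_{\beta,\alpha}(x)$, where $\Gamma_{\beta,\alpha}$ sums, over directed paths from $\alpha$ to $\beta$ in the graph with $M$ reversed, the composite of $\partial_{\sigma_{i+1},\sigma_i}$ (ordinary steps) and $-\partial_{\sigma_i,\sigma_{i+1}}^{-1}$ (reversed matched edges). *)

theory Defs
  imports "HOL-Analysis.Analysis"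
begin

text \<open>All degrees C n are modelled as subspaces of one ambient Euclidean space 'v
  (with its inner product).  The boundary is indexed so that d n is the map
  from C (n+1) to C n, i.e. d n is the paper's boundary in degree n+1; the
  boundary in degree 0 is zero (C_{-1} = 0).\<close>

definition chain_complex :: "(nat \<Rightarrow> 'v::euclidean_space set) \<Rightarrow> (nat \<Rightarrow> 'v \<Rightarrow> 'v) \<Rightarrow> bool" where
  "chain_complex C d \<longleftrightarrow>
     (\<forall>n. subspace (C n)) \<and> (\<forall>n. linear (d n)) \<and>
     (\<forall>n. d n ` C (Suc n) \<subseteq> C n) \<and>
     (\<forall>n x. x \<in> C (Suc (Suc n)) \<longrightarrow> d n (d (Suc n) x) = 0)"

definition finite_type :: "(nat \<Rightarrow> 'v::euclidean_space set) \<Rightarrow> bool" where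
  "finite_type C \<longleftrightarrow> (\<exists>N. \<forall>n>N. C n = {0})"

definition adj :: "'v::euclidean_space set \<Rightarrow> ('v \<Rightarrow> 'v) \<Rightarrow> 'v \<Rightarrow> 'v" where
  "adj A f y = (THE z. z \<in> A \<and> (\<forall>x\<in>A. inner (f x) y = inner x z))"

definition laplacian :: "(nat \<Rightarrow> 'v::euclidean_space set) \<Rightarrow> (nat \<Rightarrow> 'v \<Rightarrow> 'v) \<Rightarrow> nat \<Rightarrow> 'v \<Rightarrow> 'v" where
  "laplacian C d n x =
     (case n of 0 \<Rightarrow> 0 | Suc k \<Rightarrow> adj (C n) (d k) (d k x)) + d n (adj (C (Suc n)) (d n) x)"

definition ker_lap :: "(nat \<Rightarrow> 'v::euclidean_space set) \<Rightarrow> (nat \<Rightarrow> 'v \<Rightarrow> 'v) \<Rightarrow> nat \<Rightarrow> 'v set" where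
  "ker_lap C d n = {x \<in> C n. laplacian C d n x = 0}"

definition orthonormal_basis_of :: "'v::euclidean_space set \<Rightarrow> 'v set \<Rightarrow> bool" where
  "orthonormal_basis_of S W \<longleftrightarrow>
     S \<subseteq> W \<and> span S = W \<and> (\<forall>x\<in>S. norm x = 1) \<and> pairwise orthogonal S"

text \<open>R k = R_+(del_{k+1}) (orthonormal basis of Im del_{k+1}^dagger, inside C (k+1)),
  L k = L_+(del_{k+1}) (orthonormal basis of Im del_{k+1}, inside C k),
  p k the bijection R k -> L k with del_{k+1} v = sigma (p k v), sigma > 0,
  B n a basis of Ker Delta_n.\<close>
definition hodge_basis ::
  "(nat \<Rightarrow> 'v::euclidean_space set) \<Rightarrow> (nat \<Rightarrow> 'v \<Rightarrow> 'v) \<Rightarrow> (nat \<Rightarrow> 'v set) \<Rightarrow> (nat \<Rightarrow> 'v set)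
    \<Rightarrow> (nat \<Rightarrow> 'v \<Rightarrow> 'v) \<Rightarrow> (nat \<Rightarrow> 'v set) \<Rightarrow> bool" where
  "hodge_basis C d R L p B \<longleftrightarrow>
     (\<forall>k. orthonormal_basis_of (R k) (adj (C (Suc k)) (d k) ` C k)
        \<and> orthonormal_basis_of (L k) (d k ` C (Suc k))
        \<and> bij_betw (p k) (R k) (L k)
        \<and> (\<forall>v\<in>R k. \<exists>\<sigma>>0. d k v = \<sigma> *\<^sub>R p k v)) \<and>
     (\<forall>n. independent (B n) \<and> span (B n) = ker_lap C d n)"

definition hodge_index :: "(nat \<Rightarrow> 'v set) \<Rightarrow> (nat \<Rightarrow> 'v set) \<Rightarrow> (nat \<Rightarrow> 'v set) \<Rightarrow> nat \<Rightarrow> 'v set" where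
  "hodge_index R L B n = L n \<union> (case n of 0 \<Rightarrow> {} | Suc k \<Rightarrow> R k) \<union> B n"

text \<open>Cells of the based complex: a cell is (degree, basis vector); the summand is
  the line spanned by the vector.\<close>
definition hodge_cells :: "(nat \<Rightarrow> 'v set) \<Rightarrow> (nat \<Rightarrow> 'v set) \<Rightarrow> (nat \<Rightarrow> 'v set) \<Rightarrow> (nat \<times> 'v) set" where
  "hodge_cells R L B = {(n, v). v \<in> hodge_index R L B n}"

text \<open>Matrix entry del_{beta,alpha} = pi_beta del i_alpha, written as a scalar with respect
  to the generating vectors: the coefficient of w in the expansion of del v in the basis
  I_m, for alpha = (m+1, v), beta = (m, w).\<close>
definition hodge_coef :: "(nat \<Rightarrow> 'v::euclidean_space \<Rightarrow> 'v) \<Rightarrow> (nat \<Rightarrow> 'v set) \<Rightarrow> (nat \<Rightarrow> 'v set)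
    \<Rightarrow> (nat \<Rightarrow> 'v set) \<Rightarrow> nat \<times> 'v \<Rightarrow> nat \<times> 'v \<Rightarrow> real" where
  "hodge_coef d R L B \<beta> \<alpha> =
     (if fst \<alpha> = Suc (fst \<beta>)
      then representation (hodge_index R L B (fst \<beta>)) (d (fst \<beta>) (snd \<alpha>)) (snd \<beta>)
      else 0)"

definition hodge_matching :: "(nat \<Rightarrow> 'v::euclidean_space \<Rightarrow> 'v) \<Rightarrow> (nat \<Rightarrow> 'v set) \<Rightarrow> (nat \<Rightarrow> 'v set)
    \<Rightarrow> ((nat \<times> 'v) \<times> (nat \<times> 'v)) set" where
  "hodge_matching d R L =
     {((Suc k, v), (k, w)) | k v w. v \<in> R k \<and> w \<in> L k \<and> (\<exists>\<sigma>. \<sigma> \<noteq> 0 \<and> d k v = \<sigma> *\<^sub>R w)}"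

text \<open>X: cells, deg: degree, c b a: the (scalar) component del_{b,a}.\<close>
definition graph_edges :: "'c set \<Rightarrow> ('c \<Rightarrow> nat) \<Rightarrow> ('c \<Rightarrow> 'c \<Rightarrow> real) \<Rightarrow> ('c \<times> 'c) set" where
  "graph_edges X deg c = {(a, b). a \<in> X \<and> b \<in> X \<and> deg a = Suc (deg b) \<and> c b a \<noteq> 0}"

definition rev_graph :: "'c set \<Rightarrow> ('c \<Rightarrow> nat) \<Rightarrow> ('c \<Rightarrow> 'c \<Rightarrow> real) \<Rightarrow> ('c \<times> 'c) set \<Rightarrow> ('c \<times> 'c) set" where
  "rev_graph X deg c M = (graph_edges X deg c - M) \<union> M\<inverse>"

definition morse_matching :: "'c set \<Rightarrow> ('c \<Rightarrow> nat) \<Rightarrow> ('c \<Rightarrow> 'c \<Rightarrow> real) \<Rightarrow> ('c \<times> 'c) set \<Rightarrow> bool" where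
  "morse_matching X deg c M \<longleftrightarrow>
     M \<subseteq> graph_edges X deg c \<and>
     (\<forall>e\<in>M. \<forall>e'\<in>M. e \<noteq> e' \<longrightarrow> {fst e, snd e} \<inter> {fst e', snd e'} = {}) \<and>
     (\<forall>(a, b)\<in>M. c b a \<noteq> 0) \<and>
     (\<forall>n. partial_order_on {a \<in> X. deg a = n}
            {(a, b). a \<in> X \<and> b \<in> X \<and> deg a = n \<and> deg b = n \<and> (a, b) \<in> (rev_graph X deg c M)\<^sup>*})"

definition critical :: "'c set \<Rightarrow> ('c \<times> 'c) set \<Rightarrow> 'c set" where
  "critical X M = {a \<in> X. \<forall>(x, y)\<in>M. a \<noteq> x \<and> a \<noteq> y}"

definition is_path :: "('c \<times> 'c) set \<Rightarrow> 'c list \<Rightarrow> 'c \<Rightarrow> 'c \<Rightarrow> bool" where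
  "is_path E p a b \<longleftrightarrow> p \<noteq> [] \<and> hd p = a \<and> last p = b \<and>
     (\<forall>i. Suc i < length p \<longrightarrow> (p ! i, p ! Suc i) \<in> E)"

definition path_weight :: "('c \<Rightarrow> 'c \<Rightarrow> real) \<Rightarrow> ('c \<times> 'c) set \<Rightarrow> 'c list \<Rightarrow> real" where
  "path_weight c M p = (\<Prod>i | Suc i < length p.
      (if (p ! Suc i, p ! i) \<in> M then - inverse (c (p ! i) (p ! Suc i)) else c (p ! Suc i) (p ! i)))"

definition Gamma :: "'c set \<Rightarrow> ('c \<Rightarrow> nat) \<Rightarrow> ('c \<Rightarrow> 'c \<Rightarrow> real) \<Rightarrow> ('c \<times> 'c) set \<Rightarrow> 'c \<Rightarrow> 'c \<Rightarrow> real" where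
  "Gamma X deg c M b a = (\<Sum>p \<in> {p. is_path (rev_graph X deg c M) p a b}. path_weight c M p)"

text \<open>Morse boundary applied to the generator of a critical cell a, given as its
  coefficient function on critical cells.\<close>
definition morse_boundary :: "'c set \<Rightarrow> ('c \<Rightarrow> nat) \<Rightarrow> ('c \<Rightarrow> 'c \<Rightarrow> real) \<Rightarrow> ('c \<times> 'c) set \<Rightarrow> 'c \<Rightarrow> 'c \<Rightarrow> real" where
  "morse_boundary X deg c M a =
     (\<lambda>b. if b \<in> critical X M \<and> deg a = Suc (deg b) then Gamma X deg c M b a else 0)"

end

theory Submission
  imports Defs
begin

text \<open>
  Every vector of a Hodge basis is a boundary (in L_+), a coboundary (in R_+) or harmonic.
  Boundaries and harmonic vectors are cycles, while a coboundary v in R_+(del_(k+1)) has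
  boundary sigma * p v, p v being its partner in L_+(del_(k+1)).  Since the basis of each degree
  is linearly independent, the only nonzero entries of the boundary matrix are those of the
  matched pairs: the graph of the based complex is the Hodge matching itself.  Once the matching
  is reversed every edge raises the degree, so no nontrivial path stays in one degree (the
  matching is Morse) and no path leads from degree n+1 down to degree n (the Morse boundary
  vanishes).  The unmatched cells are the harmonic basis vectors, which span Ker Delta.
\<close>

lemma adj_mem_inner:
  fixes A :: "'v::euclidean_space set"
  assumes "subspace A" and "linear f"
  shows adj_mem: "adj A f y \<in> A"
    and inner_adj: "x \<in> A \<Longrightarrow> inner (f x) y = inner x (adj A f y)"
proof -
  obtain z0 z where z0: "z0 \<in> span A" and z: "\<And>w. w \<in> span A \<Longrightarrow> orthogonal z w"
    and split: "adjoint f y = z0 + z"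
    using orthogonal_subspace_decomp_exists[of A "adjoint f y"] by blast
  have z0_adj: "z0 \<in> A \<and> (\<forall>x\<in>A. inner (f x) y = inner x z0)"
  proof (intro conjI ballI)
    show "z0 \<in> A" using z0 \<open>subspace A\<close> by (metis span_eq_iff)
    fix x assume "x \<in> A"
    then have "inner x z = 0"
      using z[of x] by (simp add: span_base orthogonal_def inner_commute)
    then show "inner (f x) y = inner x z0"
      using adjoint_works[OF \<open>linear f\<close>, of x y] split by (simp add: inner_add_right)
  qed
  have unique: "w = z0" if "w \<in> A \<and> (\<forall>x\<in>A. inner (f x) y = inner x w)" for w
  proof -
    have "w - z0 \<in> A" using that z0_adj \<open>subspace A\<close> by (simp add: subspace_diff)
    then have "inner (w - z0) (w - z0) = 0"
      using that z0_adj by (simp add: inner_diff_right)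
    then show ?thesis by simp
  qed
  have "adj A f y = z0"
    unfolding adj_def using z0_adj unique by (rule the_equality)
  then show "adj A f y \<in> A" and "x \<in> A \<Longrightarrow> inner (f x) y = inner x (adj A f y)"
    using z0_adj by auto
qed

lemma independent_Un_orthogonal:
  fixes S T :: "'v::euclidean_space set"
  assumes S: "independent S" and T: "independent T"
    and orth: "\<And>x y. x \<in> S \<Longrightarrow> y \<in> T \<Longrightarrow> orthogonal x y"
  shows "independent (S \<union> T)"
proof
  have fin: "finite S" "finite T"
    using finiteI_independent[OF S] finiteI_independent[OF T] .
  have disj: "S \<inter> T = {}"
  proof (intro equals0I)
    fix x assume "x \<in> S \<inter> T"
    then have "x = 0" using orth orthogonal_self by blast
    then show False using \<open>x \<in> S \<inter> T\<close> S dependent_zero by blast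
  qed
  assume "dependent (S \<union> T)"
  then obtain u where nz: "\<exists>v\<in>S \<union> T. u v \<noteq> 0" and "(\<Sum>v\<in>S \<union> T. u v *\<^sub>R v) = 0"
    using dependent_finite[of "S \<union> T"] fin by auto
  then have "(\<Sum>v\<in>S. u v *\<^sub>R v) + (\<Sum>v\<in>T. u v *\<^sub>R v) = 0 + 0"
    using disj fin by (simp add: sum.union_disjoint)
  then have "(\<Sum>v\<in>S. u v *\<^sub>R v) = 0 \<and> (\<Sum>v\<in>T. u v *\<^sub>R v) = 0"
    by (rule orthogonal_subspace_decomp_unique[where S = S and T = T])
      (auto intro: orth span_sum span_scale span_base span_zero)
  moreover have "\<forall>v\<in>S. u v = 0" if "(\<Sum>v\<in>S. u v *\<^sub>R v) = 0"
    using S that dependent_finite[OF fin(1)] by blast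
  moreover have "\<forall>v\<in>T. u v = 0" if "(\<Sum>v\<in>T. u v *\<^sub>R v) = 0"
    using T that dependent_finite[OF fin(2)] by blast
  ultimately show False using nz by blast
qed

lemma representation_scaleR_basis:
  assumes "independent S" and "b \<in> S"
  shows "representation S (c *\<^sub>R b) w = (if w = b then c else 0)"
  using representation_scale[OF assms(1) span_base[OF assms(2)], of c]
    representation_basis[OF assms] by simp

lemma scaleR_basis_eq_imp_eq:
  assumes "independent S" and "b \<in> S" and "b' \<in> S"
    and "s \<noteq> 0" and "s *\<^sub>R b = s' *\<^sub>R b'"
  shows "b = b'"
  using representation_scaleR_basis[OF assms(1,2), of s b]
    representation_scaleR_basis[OF assms(1,3), of s' b] assms(4,5)
  by (auto split: if_splits)

lemma is_path_rtrancl: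
  assumes "is_path E q a b"
  shows "(a, b) \<in> E\<^sup>*"
  using assms
proof (induction q arbitrary: a)
  case Nil
  then show ?case by (simp add: is_path_def)
next
  case (Cons x xs)
  show ?case
  proof (cases xs)
    case Nil
    with Cons.prems show ?thesis by (auto simp: is_path_def)
  next
    case (Cons y ys)
    have "(a, y) \<in> E" and "is_path E xs y b"
      using Cons.prems \<open>xs = y # ys\<close> unfolding is_path_def by force+
    then show ?thesis using Cons.IH by (meson converse_rtrancl_into_rtrancl)
  qed
qed

lemma rtrancl_converse_degree:
  assumes "\<And>a b. (a, b) \<in> M \<Longrightarrow> deg a = Suc (deg b)" and "(a, b) \<in> (M\<inverse>)\<^sup>*"
  shows "a = b \<or> deg a < deg b"
  using assms(2) by induction (auto dest: assms(1))

lemma rev_graph_eq_converse: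
  "graph_edges X deg c = M \<Longrightarrow> rev_graph X deg c M = M\<inverse>"
  unfolding rev_graph_def by simp

lemma degree_if_graph_edges_eq:
  "graph_edges X deg c = M \<Longrightarrow> (a, b) \<in> M \<Longrightarrow> deg a = Suc (deg b)"
  unfolding graph_edges_def by blast

lemma morse_matching_if_graph_edges_eq:
  assumes graph: "graph_edges X deg c = M"
    and disjoint: "\<forall>e\<in>M. \<forall>e'\<in>M. e \<noteq> e' \<longrightarrow> {fst e, snd e} \<inter> {fst e', snd e'} = {}"
  shows "morse_matching X deg c M"
  unfolding morse_matching_def
proof (intro conjI allI)
  show "M \<subseteq> graph_edges X deg c" using graph by simp
  show "\<forall>(a, b)\<in>M. c b a \<noteq> 0" using graph unfolding graph_edges_def by blast
  show "\<forall>e\<in>M. \<forall>e'\<in>M. e \<noteq> e' \<longrightarrow> {fst e, snd e} \<inter> {fst e', snd e'} = {}"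
    by (fact disjoint)
  fix n
  have "a = b" if "(a, b) \<in> (rev_graph X deg c M)\<^sup>*" and "deg a = deg b" for a b
    using rtrancl_converse_degree[OF degree_if_graph_edges_eq[OF graph]] that
    unfolding rev_graph_eq_converse[OF graph] by fastforce
  then have order_eq: "{(a, b). a \<in> X \<and> b \<in> X \<and> deg a = n \<and> deg b = n \<and> (a, b) \<in> (rev_graph X deg c M)\<^sup>*}
      = Id_on {a \<in> X. deg a = n}"
    by (auto simp: Id_on_def)
  show "partial_order_on {a \<in> X. deg a = n}
      {(a, b). a \<in> X \<and> b \<in> X \<and> deg a = n \<and> deg b = n \<and> (a, b) \<in> (rev_graph X deg c M)\<^sup>*}"
    unfolding order_eq partial_order_on_def preorder_on_def refl_on_def trans_def antisym_def
    by auto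
qed

lemma morse_boundary_eq_0_if_graph_edges_eq:
  assumes graph: "graph_edges X deg c = M"
  shows "morse_boundary X deg c M a = (\<lambda>_. 0)"
proof
  fix b
  have "\<not> is_path (rev_graph X deg c M) q a b" if "deg a = Suc (deg b)" for q
  proof
    assume "is_path (rev_graph X deg c M) q a b"
    then have "(a, b) \<in> (M\<inverse>)\<^sup>*"
      unfolding rev_graph_eq_converse[OF graph] by (rule is_path_rtrancl)
    then show False
      using rtrancl_converse_degree[OF degree_if_graph_edges_eq[OF graph]] that by fastforce
  qed
  then show "morse_boundary X deg c M a b = 0"
    unfolding morse_boundary_def Gamma_def by auto
qed

locale hodge_based_complex =
  fixes C :: "nat \<Rightarrow> 'v::euclidean_space set" and d :: "nat \<Rightarrow> 'v \<Rightarrow> 'v"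
    and R L :: "nat \<Rightarrow> 'v set" and p :: "nat \<Rightarrow> 'v \<Rightarrow> 'v" and B :: "nat \<Rightarrow> 'v set"
  assumes chain_complex: "chain_complex C d"
    and hodge_basis: "hodge_basis C d R L p B"
begin

abbreviation d_adj :: "nat \<Rightarrow> 'v \<Rightarrow> 'v" where
  "d_adj k \<equiv> adj (C (Suc k)) (d k)"

abbreviation cells where "cells \<equiv> hodge_cells R L B"
abbreviation matching where "matching \<equiv> hodge_matching d R L"
abbreviation coef where "coef \<equiv> hodge_coef d R L B"

lemma subspace_C: "subspace (C n)"
  and linear_d: "linear (d n)"
  and d_mem: "x \<in> C (Suc n) \<Longrightarrow> d n x \<in> C n"
  and d_d_eq_0: "x \<in> C (Suc (Suc n)) \<Longrightarrow> d n (d (Suc n) x) = 0"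
  using chain_complex unfolding chain_complex_def by blast+

lemma d_adj_mem: "d_adj k y \<in> C (Suc k)"
  and inner_d_adj: "x \<in> C (Suc k) \<Longrightarrow> inner (d k x) y = inner x (d_adj k y)"
  using adj_mem[OF subspace_C linear_d] inner_adj[OF subspace_C linear_d] by blast+

lemma R_orthonormal: "orthonormal_basis_of (R k) (d_adj k ` C k)"
  and L_orthonormal: "orthonormal_basis_of (L k) (d k ` C (Suc k))"
  and p_bij: "bij_betw (p k) (R k) (L k)"
  and d_R: "v \<in> R k \<Longrightarrow> \<exists>\<sigma>>0. d k v = \<sigma> *\<^sub>R p k v"
  and independent_B: "independent (B n)"
  and span_B: "span (B n) = ker_lap C d n"
  using hodge_basis unfolding hodge_basis_def by auto

lemma p_mem_L: "v \<in> R k \<Longrightarrow> p k v \<in> L k"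
  using p_bij by (blast dest: bij_betwE)

lemma R_coboundary: "v \<in> R k \<Longrightarrow> \<exists>z\<in>C k. v = d_adj k z"
  and L_boundary: "w \<in> L k \<Longrightarrow> \<exists>y\<in>C (Suc k). w = d k y"
  and norm_R: "v \<in> R k \<Longrightarrow> norm v = 1"
  and norm_L: "w \<in> L k \<Longrightarrow> norm w = 1"
  and pairwise_orthogonal_R: "pairwise orthogonal (R k)"
  and pairwise_orthogonal_L: "pairwise orthogonal (L k)"
  using R_orthonormal[of k] L_orthonormal[of k] unfolding orthonormal_basis_of_def by blast+

lemma inner_laplacian:
  assumes "x \<in> C n"
  shows "inner (laplacian C d n x) x
    = (case n of 0 \<Rightarrow> 0 | Suc k \<Rightarrow> (norm (d k x))\<^sup>2) + (norm (d_adj n x))\<^sup>2"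
proof -
  have "inner (d n (d_adj n x)) x = (norm (d_adj n x))\<^sup>2"
    using inner_d_adj[OF d_adj_mem] by (simp add: power2_norm_eq_inner)
  moreover have "inner (d_adj k (d k x)) x = (norm (d k x))\<^sup>2" if "n = Suc k" for k
    using inner_d_adj[of x k "d k x"] assms that
    by (simp add: power2_norm_eq_inner inner_commute)
  ultimately show ?thesis
    unfolding laplacian_def by (cases n) (simp_all add: inner_add_left)
qed

lemma harmonic_imp_cocycle: "x \<in> ker_lap C d n \<Longrightarrow> d_adj n x = 0"
  and harmonic_imp_cycle: "x \<in> ker_lap C d (Suc k) \<Longrightarrow> d k x = 0"
  using inner_laplacian[of x n] inner_laplacian[of x "Suc k"]
  by (cases n; auto simp: ker_lap_def add_nonneg_eq_0_iff)+

lemma B_harmonic: "b \<in> B n \<Longrightarrow> b \<in> ker_lap C d n"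
  using span_B span_base by blast

lemma orthogonal_L_Suc_R: "w \<in> L (Suc k) \<Longrightarrow> u \<in> R k \<Longrightarrow> orthogonal w u"
  using L_boundary[of w "Suc k"] R_coboundary[of u k] inner_d_adj d_mem d_d_eq_0
  by (fastforce simp: orthogonal_def)

lemma orthogonal_L_B: "w \<in> L n \<Longrightarrow> b \<in> B n \<Longrightarrow> orthogonal w b"
  using L_boundary[of w n] inner_d_adj harmonic_imp_cocycle[OF B_harmonic]
  by (fastforce simp: orthogonal_def)

lemma orthogonal_R_B: "u \<in> R k \<Longrightarrow> b \<in> B (Suc k) \<Longrightarrow> orthogonal u b"
  using R_coboundary[of u k] inner_d_adj harmonic_imp_cycle[OF B_harmonic]
    B_harmonic[of b "Suc k"]
  by (fastforce simp: orthogonal_def ker_lap_def inner_commute)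

lemma independent_hodge_index: "independent (hodge_index R L B n)"
proof -
  define LR where "LR = L n \<union> (case n of 0 \<Rightarrow> {} | Suc k \<Rightarrow> R k)"
  have "pairwise orthogonal LR"
    using pairwise_orthogonal_L[of n] pairwise_orthogonal_R orthogonal_L_Suc_R
    unfolding LR_def pairwise_def by (cases n) (auto; meson orthogonal_commute)+
  moreover have "0 \<notin> LR"
    unfolding LR_def by (cases n) (auto dest: norm_L norm_R)
  ultimately have "independent LR"
    by (rule pairwise_orthogonal_independent)
  then have "independent (LR \<union> B n)"
    using independent_B
    by (rule independent_Un_orthogonal)
      (auto simp: LR_def orthogonal_L_B orthogonal_R_B split: nat.splits)
  then show ?thesis
    unfolding hodge_index_def LR_def .
qed

lemma R_disjoint_L_Suc: "v \<in> R k \<Longrightarrow> v \<notin> L (Suc k)"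
  using orthogonal_L_Suc_R[of v k v] norm_R[of v k] by (auto simp: orthogonal_self)

lemma L_disjoint_B: "v \<in> L n \<Longrightarrow> v \<notin> B n"
  using orthogonal_L_B[of v n v] norm_L[of v n] by (auto simp: orthogonal_self)

lemma R_disjoint_B_Suc: "v \<in> R k \<Longrightarrow> v \<notin> B (Suc k)"
  using orthogonal_R_B[of v k v] norm_R[of v k] by (auto simp: orthogonal_self)

lemma d_hodge_index_cases:
  assumes "v \<in> hodge_index R L B (Suc m)"
  obtains "d m v = 0"
    | \<sigma> where "v \<in> R m" and "\<sigma> > 0" and "d m v = \<sigma> *\<^sub>R p m v"
proof -
  consider "v \<in> L (Suc m)" | "v \<in> R m" | "v \<in> B (Suc m)"
    using assms unfolding hodge_index_def by auto
  then show thesis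
  proof cases
    case 1
    then show thesis using L_boundary d_d_eq_0 that(1) by blast
  next
    case 2
    then show thesis using d_R that(2) by blast
  next
    case 3
    then show thesis using harmonic_imp_cycle[OF B_harmonic] that(1) by blast
  qed
qed

lemma hodge_matching_eq: "matching = {((Suc k, v), (k, p k v)) | k v. v \<in> R k}"
proof (intro equalityI subsetI)
  fix e assume "e \<in> matching"
  then obtain k v w s where e: "e = ((Suc k, v), (k, w))" and v: "v \<in> R k" and w: "w \<in> L k"
    and "s \<noteq> 0" and d_v: "d k v = s *\<^sub>R w"
    unfolding hodge_matching_def by blast
  obtain \<sigma> where "d k v = \<sigma> *\<^sub>R p k v" using d_R[OF v] by blast
  with d_v have "s *\<^sub>R w = \<sigma> *\<^sub>R p k v" by simp
  moreover have "w \<in> hodge_index R L B k" "p k v \<in> hodge_index R L B k"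
    using w p_mem_L[OF v] by (simp_all add: hodge_index_def)
  ultimately have "w = p k v"
    using scaleR_basis_eq_imp_eq[OF independent_hodge_index _ _ \<open>s \<noteq> 0\<close>] by blast
  then show "e \<in> {((Suc k, v), (k, p k v)) | k v. v \<in> R k}" using e v by blast
next
  fix e assume "e \<in> {((Suc k, v), (k, p k v)) | k v. v \<in> R k}"
  then obtain k v where e: "e = ((Suc k, v), (k, p k v))" and v: "v \<in> R k" by blast
  obtain \<sigma> where "\<sigma> > 0" "d k v = \<sigma> *\<^sub>R p k v" using d_R[OF v] by blast
  then have "\<exists>\<sigma>. \<sigma> \<noteq> 0 \<and> d k v = \<sigma> *\<^sub>R p k v" by (intro exI[of _ \<sigma>]) simp
  then show "e \<in> matching"
    unfolding hodge_matching_def e using v p_mem_L[OF v] by blast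
qed

lemma coef_eq: "coef (k, w) (Suc k, v) = representation (hodge_index R L B k) (d k v) w"
  unfolding hodge_coef_def by simp

lemma graph_edges_eq_hodge_matching: "graph_edges cells fst coef = matching"
proof (intro equalityI subsetI)
  fix e assume "e \<in> graph_edges cells fst coef"
  then obtain m v w where e: "e = ((Suc m, v), (m, w))" and v: "v \<in> hodge_index R L B (Suc m)"
    and nz: "representation (hodge_index R L B m) (d m v) w \<noteq> 0"
    unfolding graph_edges_def hodge_cells_def by (auto simp: coef_eq)
  from v show "e \<in> matching"
  proof (cases rule: d_hodge_index_cases)
    case 1
    then show ?thesis using nz by (simp add: representation_zero)
  next
    case (2 \<sigma>)
    have "p m v \<in> hodge_index R L B m"
      using p_mem_L[OF \<open>v \<in> R m\<close>] by (simp add: hodge_index_def)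
    then have "w = p m v"
      using nz 2 by (simp add: representation_scaleR_basis[OF independent_hodge_index] split: if_splits)
    then show ?thesis using e \<open>v \<in> R m\<close> by (simp add: hodge_matching_eq)
  qed
next
  fix e assume "e \<in> matching"
  then obtain k v where e: "e = ((Suc k, v), (k, p k v))" and v: "v \<in> R k"
    by (auto simp: hodge_matching_eq)
  obtain \<sigma> where "\<sigma> > 0" "d k v = \<sigma> *\<^sub>R p k v" using d_R[OF v] by blast
  moreover have "p k v \<in> hodge_index R L B k"
    using p_mem_L[OF v] by (simp add: hodge_index_def)
  ultimately have "coef (k, p k v) (Suc k, v) \<noteq> 0"
    by (simp add: coef_eq representation_scaleR_basis[OF independent_hodge_index])
  then show "e \<in> graph_edges cells fst coef"
    using \<open>p k v \<in> hodge_index R L B k\<close> v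
    unfolding e graph_edges_def hodge_cells_def by (auto simp: hodge_index_def)
qed

lemma hodge_matching_disjoint:
  "\<forall>e\<in>matching. \<forall>e'\<in>matching. e \<noteq> e' \<longrightarrow> {fst e, snd e} \<inter> {fst e', snd e'} = {}"
proof (intro ballI impI)
  fix e e' assume "e \<in> matching" "e' \<in> matching" "e \<noteq> e'"
  then obtain k v k' v' where e: "e = ((Suc k, v), (k, p k v))" "v \<in> R k"
    and e': "e' = ((Suc k', v'), (k', p k' v'))" "v' \<in> R k'"
    and ne: "(k, v) \<noteq> (k', v')"
    by (auto simp: hodge_matching_eq)
  have "p k v \<noteq> p k' v'" if "k = k'"
    using ne that e(2) e'(2) p_bij[of k] by (auto dest: bij_betw_imp_inj_on inj_onD)
  moreover have "v \<noteq> p k' v'" if "k' = Suc k"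
    using that e(2) e'(2) p_mem_L R_disjoint_L_Suc by blast
  moreover have "v' \<noteq> p k v" if "k = Suc k'"
    using that e(2) e'(2) p_mem_L R_disjoint_L_Suc by blast
  ultimately show "{fst e, snd e} \<inter> {fst e', snd e'} = {}"
    using e e' ne by auto
qed

lemma critical_hodge_cells: "{v. (n, v) \<in> critical cells matching} = B n"
proof -
  have "(n, v) \<in> critical cells matching \<longleftrightarrow> v \<in> B n" for v
  proof
    assume crit: "(n, v) \<in> critical cells matching"
    then have "v \<in> hodge_index R L B n"
      unfolding critical_def hodge_cells_def by blast
    moreover have "v \<notin> L n"
    proof
      assume "v \<in> L n"
      then obtain v' where "v' \<in> R n" "v = p n v'"
        using p_bij[of n] by (metis bij_betw_imp_surj_on imageE)
      then show False using crit by (auto simp: critical_def hodge_matching_eq)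
    qed
    moreover have "v \<notin> R k" if "n = Suc k" for k
      using crit that by (auto simp: critical_def hodge_matching_eq)
    ultimately show "v \<in> B n"
      unfolding hodge_index_def by (auto split: nat.splits)
  next
    assume "v \<in> B n"
    moreover have "v \<notin> L n" using \<open>v \<in> B n\<close> L_disjoint_B by blast
    moreover have "v \<notin> R k" if "n = Suc k" for k
      using \<open>v \<in> B n\<close> that R_disjoint_B_Suc by blast
    ultimately show "(n, v) \<in> critical cells matching"
      using p_mem_L
      by (auto simp: critical_def hodge_cells_def hodge_index_def hodge_matching_eq)
  qed
  then show ?thesis by blast
qed

end

theorem mainTheorem4:
  fixes C :: "nat \<Rightarrow> 'v::euclidean_space set" and d :: "nat \<Rightarrow> 'v \<Rightarrow> 'v"
    and R L B :: "nat \<Rightarrow> 'v set" and p :: "nat \<Rightarrow> 'v \<Rightarrow> 'v"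
  assumes "chain_complex C d" and "finite_type C" and "hodge_basis C d R L p B"
  shows "morse_matching (hodge_cells R L B) fst (hodge_coef d R L B) (hodge_matching d R L)
    \<and> (\<forall>n. span {v. (n, v) \<in> critical (hodge_cells R L B) (hodge_matching d R L)} = ker_lap C d n)
    \<and> (\<forall>a \<in> critical (hodge_cells R L B) (hodge_matching d R L).
         morse_boundary (hodge_cells R L B) fst (hodge_coef d R L B) (hodge_matching d R L) a = (\<lambda>_. 0))"
proof -
  interpret hodge_based_complex C d R L p B
    using assms(1,3) by unfold_locales
  note graph = graph_edges_eq_hodge_matching
  show ?thesis
    using morse_matching_if_graph_edges_eq[OF graph hodge_matching_disjoint]
      morse_boundary_eq_0_if_graph_edges_eq[OF graph] critical_hodge_cells span_B
    by simp
qed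

end
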